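(* Let $\mathbb Z^N\subset\mathbb R^N$ be the lattice generated by an orthonormal basis, let $F\subset\mathbb R^N$ be a subspace and $\phi:\mathbb R^N\to F$ the orthogonal projection. Let $F=V\oplus W$ be a direct sum decomposition into real subspaces such that $\phi(\mathbb Z^N)\cap V$ is dense in $V$, $\phi(\mathbb Z^N)\cap W$ is discrete, and $\phi(\mathbb Z^N)=(V\cap\phi(\mathbb Z^N))+(W\cap\phi(\mathbb Z^N))$. Then $(F\cap\mathbb Z^N)+(V\cap\phi(\mathbb Z^N))$ is a subgroup of finite index in $\phi(\mathbb Z^N)$, the lattice $F\cap\mathbb Z^N$ has rank $\dim F-\dim V$, and the real vector space spanned by $F\cap\mathbb Z^N$ is orthogonal to $V$. *)

theory Defs
  imports "HOL-Analysis.Analysis"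
begin

definition int_lattice :: "(real ^ 'n) set" where
  "int_lattice = {x. \<forall>i. x $ i \<in> \<int>}"

definition add_subgroup_of :: "'a::ab_group_add set \<Rightarrow> 'a set \<Rightarrow> bool" where
  "add_subgroup_of H G \<longleftrightarrow> H \<subseteq> G \<and> 0 \<in> H \<and>
     (\<forall>x\<in>H. \<forall>y\<in>H. x + y \<in> H) \<and> (\<forall>x\<in>H. - x \<in> H)"

definition finite_index :: "'a::ab_group_add set \<Rightarrow> 'a set \<Rightarrow> bool" where
  "finite_index H G \<longleftrightarrow> finite ((\<lambda>x. (\<lambda>h. x + h) ` H) ` G)"

definition int_independent :: "'a::real_vector set \<Rightarrow> bool" where
  "int_independent S \<longleftrightarrow> (\<forall>T c. finite T \<and> T \<subseteq> S \<and> (\<forall>v\<in>T. c v \<in> \<int>) \<and>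
       (\<Sum>v\<in>T. c v *\<^sub>R v) = 0 \<longrightarrow> (\<forall>v\<in>T. c v = 0))"

definition group_rank :: "'a::real_vector set \<Rightarrow> nat" where
  "group_rank L = (GREATEST k. \<exists>S. S \<subseteq> L \<and> finite S \<and> card S = k \<and> int_independent S)"

definition set_plus_sp :: "'a::ab_group_add set \<Rightarrow> 'a set \<Rightarrow> 'a set" where
  "set_plus_sp A B = {a + b | a b. a \<in> A \<and> b \<in> B}"

end

(* Everything rests on one fact: the kernel of a linear map f on R^N is spanned by its
   lattice points as soon as the nonzero values of f on Z^N stay away from 0 (Dirichlet's
   simultaneous approximation gives q x close to a lattice point z, the gap forces f z = 0,
   and z / q is close to x).

   Let P = phi^-1(V). Applied to x |-> phi x minus its projection to V, whose lattice values
   are controlled by the discrete W-parts, the fact shows that P is spanned by lattice points.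
   Applied to z |-> sum_b (z . b) b for a basis b of P /\ Z^N, it shows the same for
   P^perp = F /\ V^perp. Since phi(Z^N) /\ V is dense in V while x . phi z = x . z is an
   integer for x in F /\ Z^N, the lattice F /\ Z^N is orthogonal to V, hence spans exactly
   F /\ V^perp, of dimension dim F - dim V; Z-independent lattice vectors being R-independent,
   this is its rank. Finally (P /\ Z^N) + (F /\ Z^N) is a full-rank subgroup of Z^N, so it
   contains D Z^N for some D > 0, and phi maps it into (F /\ Z^N) + (V /\ phi(Z^N)); hence the
   index is finite. *)

theory Submission
  imports Defs
begin

lemma mem_int_lattice [simp]: "x \<in> int_lattice \<longleftrightarrow> (\<forall>i. x $ i \<in> \<int>)"
  by (simp add: int_lattice_def)

lemma int_lattice_diff: "x \<in> int_lattice \<Longrightarrow> y \<in> int_lattice \<Longrightarrow> x - y \<in> int_lattice"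
  by simp

lemma int_lattice_scaleR: "r \<in> \<int> \<Longrightarrow> x \<in> int_lattice \<Longrightarrow> r *\<^sub>R x \<in> int_lattice"
  by simp

lemma int_lattice_sum: "(\<And>i. i \<in> A \<Longrightarrow> f i \<in> int_lattice) \<Longrightarrow> sum f A \<in> int_lattice"
  by (induction A rule: infinite_finite_induct) auto

lemma int_lattice_inner: "x \<in> int_lattice \<Longrightarrow> y \<in> int_lattice \<Longrightarrow> x \<bullet> y \<in> \<int>"
  unfolding inner_vec_def by (auto intro!: Ints_sum Ints_mult)

lemma int_lattice_floor: "z \<in> int_lattice \<Longrightarrow> z $ i = of_int \<lfloor>z $ i\<rfloor>"
  by (metis Ints_cases floor_of_int mem_int_lattice)

lemma int_lattice_norm_less_1:
  assumes z: "z \<in> int_lattice" and "norm z < 1"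
  shows "z = 0"
proof -
  have "\<bar>z $ i\<bar> < 1" for i
    using component_le_norm_cart[of z i] \<open>norm z < 1\<close> by linarith
  then have "z $ i = 0" for i
    using int_lattice_floor[OF z, of i] by (metis of_int_0 of_int_abs of_int_less_1_iff zabs_less_one_iff)
  then show ?thesis by (simp add: vec_eq_iff)
qed

lemma half_notin_Ints: "(1 / 2 :: real) \<notin> \<int>"
  by (simp flip: frac_eq_0_iff)

lemma add_subgroup_of_int_lattice: "add_subgroup_of int_lattice UNIV"
  by (simp add: add_subgroup_of_def)

lemma add_subgroup_of_subset: "add_subgroup_of H G \<Longrightarrow> H \<subseteq> G' \<Longrightarrow> add_subgroup_of H G'"
  by (simp add: add_subgroup_of_def)

lemma add_subgroup_of_sum:
  assumes "add_subgroup_of H G" "\<And>i. i \<in> A \<Longrightarrow> f i \<in> H"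
  shows "sum f A \<in> H"
  using assms(2) by (induction A rule: infinite_finite_induct) (use assms(1) in \<open>auto simp: add_subgroup_of_def\<close>)

lemma add_subgroup_of_int_scaleR:
  fixes x :: "'a :: real_vector"
  assumes H: "add_subgroup_of H G" and x: "x \<in> H"
  shows "of_int m *\<^sub>R x \<in> H"
proof -
  have nat: "of_nat n *\<^sub>R x \<in> H" for n
  proof (induction n)
    case (Suc n)
    then show ?case
      using H x by (simp add: add_subgroup_of_def scaleR_add_left)
  qed (use H in \<open>simp add: add_subgroup_of_def\<close>)
  show ?thesis
  proof (cases m rule: int_cases)
    case (neg n)
    then show ?thesis
      using nat[of "Suc n"] H by (simp add: add_subgroup_of_def del: of_nat_Suc)
  qed (use nat in simp)
qed

lemma add_subgroup_of_Int_subspace: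
  "subspace S \<Longrightarrow> add_subgroup_of H UNIV \<Longrightarrow> add_subgroup_of (S \<inter> H) H"
  by (simp add: add_subgroup_of_def subspace_0 subspace_add subspace_neg)

lemma add_subgroup_of_linear_image:
  assumes "linear f" "add_subgroup_of H UNIV"
  shows "add_subgroup_of (f ` H) UNIV"
  using assms unfolding add_subgroup_of_def
  by (auto simp: linear_0 simp flip: linear_add linear_neg intro!: image_eqI)

lemma set_plus_sp_subset_left: "0 \<in> B \<Longrightarrow> A \<subseteq> set_plus_sp A B"
  unfolding set_plus_sp_def by force

lemma set_plus_sp_subset_right: "0 \<in> A \<Longrightarrow> B \<subseteq> set_plus_sp A B"
  unfolding set_plus_sp_def by force

lemma add_subgroup_of_set_plus_sp:
  assumes A: "add_subgroup_of A G" and B: "add_subgroup_of B G" and G: "add_subgroup_of G UNIV"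
  shows "add_subgroup_of (set_plus_sp A B) G"
proof -
  have "a + b \<in> G" if "a \<in> A" "b \<in> B" for a b
    using that A B G unfolding add_subgroup_of_def by blast
  moreover have "0 + 0 \<in> set_plus_sp A B"
    using A B unfolding add_subgroup_of_def set_plus_sp_def by blast
  moreover have "(a + a') + (b + b') \<in> set_plus_sp A B"
    if "a \<in> A" "a' \<in> A" "b \<in> B" "b' \<in> B" for a a' b b'
    using that A B unfolding add_subgroup_of_def set_plus_sp_def by blast
  moreover have "- a + - b \<in> set_plus_sp A B" if "a \<in> A" "b \<in> B" for a b
    using that A B unfolding add_subgroup_of_def set_plus_sp_def by blast
  ultimately show ?thesis
    unfolding add_subgroup_of_def set_plus_sp_def
    by (fastforce simp: algebra_simps)
qed

lemma add_subgroup_coset_eq: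
  assumes H: "add_subgroup_of H G" and xr: "x - r \<in> H"
  shows "(\<lambda>h. x + h) ` H = (\<lambda>h. r + h) ` H"
proof (intro equalityI image_subsetI)
  fix h assume "h \<in> H"
  then have "(x - r) + h \<in> H" and "x + h = r + ((x - r) + h)"
    using H xr by (simp_all add: add_subgroup_of_def)
  then show "x + h \<in> (\<lambda>h. r + h) ` H"
    by blast
next
  fix h assume "h \<in> H"
  moreover have "- (x - r) \<in> H"
    using H xr unfolding add_subgroup_of_def by blast
  ultimately have "h + (r - x) \<in> H"
    using H unfolding add_subgroup_of_def by simp
  moreover have "r + h = x + (h + (r - x))"
    by simp
  ultimately show "r + h \<in> (\<lambda>h. x + h) ` H"
    by blast
qed

lemma finite_index_if_finite_representatives:
  assumes H: "add_subgroup_of H G" and "finite R" and rep: "\<And>x. x \<in> G \<Longrightarrow> \<exists>r\<in>R. x - r \<in> H"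
  shows "finite_index H G"
proof -
  have "(\<lambda>x. (\<lambda>h. x + h) ` H) ` G \<subseteq> (\<lambda>r. (\<lambda>h. r + h) ` H) ` R"
  proof (rule image_subsetI)
    fix x assume "x \<in> G"
    then obtain r where "r \<in> R" "x - r \<in> H"
      using rep by blast
    then show "(\<lambda>h. x + h) ` H \<in> (\<lambda>r. (\<lambda>h. r + h) ` H) ` R"
      using add_subgroup_coset_eq[OF H] by blast
  qed
  then show ?thesis
    unfolding finite_index_def using \<open>finite R\<close> by (meson finite_imageI finite_subset)
qed

lemma finite_vectors: "(\<And>i. finite (B i)) \<Longrightarrow> finite {v :: 'a ^ 'n. \<forall>i. v $ i \<in> B i}"
proof -
  assume "\<And>i. finite (B i)"
  then have "finite (vec_lambda ` Pi\<^sub>E (UNIV :: 'n set) B)"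
    by (simp add: finite_PiE)
  moreover have "{v. \<forall>i. v $ i \<in> B i} \<subseteq> vec_lambda ` Pi\<^sub>E UNIV B"
    by (auto simp: image_iff intro!: bexI[of _ "vec_nth _"])
  ultimately show ?thesis
    by (rule finite_subset[rotated])
qed

lemma finite_index_linear_image_int_lattice:
  fixes f :: "real ^ 'n \<Rightarrow> 'a :: real_vector"
  assumes "linear f" and H: "add_subgroup_of H (f ` int_lattice)" and "D > 0"
    and DH: "\<And>z. z \<in> int_lattice \<Longrightarrow> f (of_int D *\<^sub>R z) \<in> H"
  shows "finite_index H (f ` int_lattice)"
proof (rule finite_index_if_finite_representatives[OF H])
  let ?R = "{r :: real ^ 'n. \<forall>i. r $ i \<in> of_int ` {0..<D}}"
  show "finite (f ` ?R)"
    by (simp add: finite_vectors)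
  show "\<exists>r\<in>f ` ?R. x - r \<in> H" if x: "x \<in> f ` int_lattice" for x
  proof -
    obtain z where z: "z \<in> int_lattice" "x = f z"
      using x by blast
    define q :: "real ^ 'n" where "q = (\<chi> i. of_int (\<lfloor>z $ i\<rfloor> div D))"
    define r where "r = z - of_int D *\<^sub>R q"
    have "r $ i = of_int (\<lfloor>z $ i\<rfloor> mod D)" for i
    proof -
      obtain a where "z $ i = of_int a"
        using z(1) by (auto elim: Ints_cases)
      then show ?thesis
        by (simp add: r_def q_def flip: of_int_mult of_int_diff minus_mult_div_eq_mod)
    qed
    then have "r \<in> ?R"
      using \<open>D > 0\<close> by auto
    have "x - f r = f (of_int D *\<^sub>R q)"
      using z(2) \<open>linear f\<close> by (simp add: r_def linear_diff)
    then have "x - f r \<in> H"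
      using DH[of q] by (simp add: q_def)
    with \<open>r \<in> ?R\<close> show ?thesis
      by blast
  qed
qed

definition is_orthogonal_projection :: "'a::real_inner set \<Rightarrow> ('a \<Rightarrow> 'a) \<Rightarrow> bool" where
  "is_orthogonal_projection S p \<longleftrightarrow> (\<forall>x. p x \<in> S \<and> (\<forall>z\<in>S. (x - p x) \<bullet> z = 0))"

lemma orthogonal_projection_exists:
  fixes S :: "'a::euclidean_space set"
  assumes "subspace S"
  obtains p where "is_orthogonal_projection S p"
proof -
  have "\<exists>y. y \<in> S \<and> (\<forall>z\<in>S. (x - y) \<bullet> z = 0)" for x
  proof -
    obtain y w where "y \<in> span S" "\<And>z. z \<in> span S \<Longrightarrow> orthogonal w z" "x = y + w"
      using orthogonal_subspace_decomp_exists by blast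
    moreover have "span S = S"
      using assms by (simp add: span_eq_iff)
    ultimately show ?thesis
      by (intro exI[of _ y]) (auto simp: orthogonal_def)
  qed
  then show ?thesis
    using that unfolding is_orthogonal_projection_def by metis
qed

lemma orthogonal_projection_inner:
  "is_orthogonal_projection S p \<Longrightarrow> z \<in> S \<Longrightarrow> p x \<bullet> z = x \<bullet> z"
  unfolding is_orthogonal_projection_def by (metis eq_iff_diff_eq_0 inner_diff_left)

lemma orthogonal_projection_unique:
  assumes S: "subspace S" and p: "is_orthogonal_projection S p"
    and "y \<in> S" and orth: "\<And>z. z \<in> S \<Longrightarrow> (x - y) \<bullet> z = 0"
  shows "p x = y"
proof -
  have "p x - y \<in> S"
    using S p \<open>y \<in> S\<close> by (simp add: is_orthogonal_projection_def subspace_diff)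
  moreover have "(p x - y) \<bullet> z = 0" if "z \<in> S" for z
    using orth[OF that] orthogonal_projection_inner[OF p that, of x] by (simp add: inner_diff_left)
  ultimately have "(p x - y) \<bullet> (p x - y) = 0"
    by blast
  then show ?thesis
    by simp
qed

lemma orthogonal_projection_id:
  "subspace S \<Longrightarrow> is_orthogonal_projection S p \<Longrightarrow> x \<in> S \<Longrightarrow> p x = x"
  by (rule orthogonal_projection_unique) auto

lemma orthogonal_projection_orthogonal_comp:
  "subspace S \<Longrightarrow> is_orthogonal_projection S p \<Longrightarrow> x \<in> S\<^sup>\<bottom> \<Longrightarrow> p x = 0"
  by (rule orthogonal_projection_unique)
     (auto simp: subspace_0 orthogonal_comp_def orthogonal_def inner_commute)

lemma orthogonal_projection_linear:
  assumes S: "subspace S" and p: "is_orthogonal_projection S p"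
  shows "linear p"
proof (rule linearI)
  have inS: "p x \<in> S" for x
    using p by (simp add: is_orthogonal_projection_def)
  show "p (x + y) = p x + p y" for x y
    using S inS orthogonal_projection_inner[OF p]
    by (intro orthogonal_projection_unique[OF S p]) (auto simp: subspace_add inner_diff_left inner_add_left)
  show "p (c *\<^sub>R x) = c *\<^sub>R p x" for c x
    using S inS orthogonal_projection_inner[OF p]
    by (intro orthogonal_projection_unique[OF S p]) (auto simp: subspace_scale inner_diff_left)
qed

lemma orthogonal_projection_bound_on_complement:
  fixes V W :: "'a::euclidean_space set"
  assumes V: "subspace V" and W: "subspace W" and "V \<inter> W = {0}"
    and q: "is_orthogonal_projection V q"
  shows "\<exists>c>0. \<forall>w\<in>W. c * norm w \<le> norm (w - q w)"
proof (rule injective_imp_isometric[OF closed_subspace[OF W] W])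
  show "bounded_linear (\<lambda>w. w - q w)"
    using bounded_linear_sub[OF bounded_linear_ident, of q] orthogonal_projection_linear[OF V q]
    by (simp add: linear_conv_bounded_linear)
  show "\<forall>w\<in>W. w - q w = 0 \<longrightarrow> w = 0"
  proof (intro ballI impI)
    fix w assume "w \<in> W" "w - q w = 0"
    moreover have "q w \<in> V"
      using q by (simp add: is_orthogonal_projection_def)
    ultimately have "w \<in> V \<inter> W"
      by simp
    with \<open>V \<inter> W = {0}\<close> show "w = 0"
      by blast
  qed
qed

lemma int_lattice_approx:
  fixes x :: "real ^ 'n"
  assumes "\<epsilon> > 0"
  obtains q :: int and z where "q > 0" "z \<in> int_lattice" "norm (of_int q *\<^sub>R x - z) < \<epsilon>"
proof -
  obtain Q :: nat where Q: "real CARD('n) / \<epsilon> < Q"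
    using reals_Archimedean2 by blast
  then have "real CARD('n) < \<epsilon> * Q"
    using \<open>\<epsilon> > 0\<close> by (simp add: field_simps)
  then have "Q > 0" and Q': "real CARD('n) / Q < \<epsilon>"
    by (cases "Q = 0"; simp add: divide_less_eq mult.commute)+
  obtain g where g: "bij_betw g (UNIV :: 'n set) {0..<CARD('n)}"
    using ex_bij_betw_finite_nat[of "UNIV :: 'n set"] by auto
  obtain q p where "q > 0" and qp: "\<And>j. j < CARD('n) \<Longrightarrow>
      \<bar>of_int q * x $ inv_into UNIV g j - of_int (p j)\<bar> < 1 / Q"
    using Dirichlet_approx_simult[OF \<open>Q > 0\<close>, where \<theta>="\<lambda>j. x $ inv_into UNIV g j" and n="CARD('n)"]
    by blast
  define z where "z = (\<chi> i. real_of_int (p (g i)))"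
  have coord: "\<bar>(of_int q *\<^sub>R x - z) $ i\<bar> < 1 / Q" for i
    using qp[of "g i"] bij_betw_apply[OF g] g by (auto simp: z_def bij_betw_def inv_into_f_f)
  have "norm (of_int q *\<^sub>R x - z) \<le> (\<Sum>i\<in>UNIV. \<bar>(of_int q *\<^sub>R x - z) $ i\<bar>)"
    by (rule norm_le_l1_cart)
  also have "\<dots> \<le> (\<Sum>i\<in>(UNIV :: 'n set). 1 / Q)"
    by (meson coord less_imp_le sum_mono)
  also have "\<dots> < \<epsilon>"
    using Q' by simp
  finally have "norm (of_int q *\<^sub>R x - z) < \<epsilon>" .
  moreover have "z \<in> int_lattice"
    by (simp add: z_def)
  ultimately show ?thesis
    using that \<open>q > 0\<close> by blast
qed

lemma kernel_in_span_int_lattice_kernel: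
  fixes f :: "real ^ 'n \<Rightarrow> 'a::real_normed_vector"
  assumes f: "linear f" and "e > 0"
    and gap: "\<And>z. z \<in> int_lattice \<Longrightarrow> norm (f z) < e \<Longrightarrow> f z = 0"
    and "f x = 0"
  shows "x \<in> span {z \<in> int_lattice. f z = 0}"
proof -
  let ?S = "span {z \<in> int_lattice. f z = 0}"
  obtain B where "B > 0" and B: "\<And>y. norm (f y) \<le> B * norm y"
    using linear_bounded_pos[OF f] by blast
  have "\<exists>y\<in>?S. dist y x < \<delta>" if "\<delta> > 0" for \<delta>
  proof -
    obtain q z where "q > 0" "z \<in> int_lattice" and qz: "norm (of_int q *\<^sub>R x - z) < min (e / B) \<delta>"
      using int_lattice_approx[of "min (e / B) \<delta>" x] \<open>\<delta> > 0\<close> \<open>e > 0\<close> \<open>B > 0\<close> by auto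
    have "f z = f (z - of_int q *\<^sub>R x)"
      using \<open>f x = 0\<close> f by (simp add: linear_diff linear_scale)
    then have "norm (f z) \<le> B * norm (of_int q *\<^sub>R x - z)"
      using B by (metis norm_minus_commute)
    also have "\<dots> < e"
      using qz \<open>B > 0\<close> by (simp add: field_simps)
    finally have "z \<in> ?S"
      using gap \<open>z \<in> int_lattice\<close> by (simp add: span_base)
    then have "(1 / of_int q) *\<^sub>R z \<in> ?S"
      by (rule span_mul)
    moreover have "(1 / of_int q) *\<^sub>R z - x = (1 / of_int q) *\<^sub>R (z - of_int q *\<^sub>R x)"
      using \<open>q > 0\<close> by (simp add: scaleR_diff_right)
    then have "dist ((1 / of_int q) *\<^sub>R z) x = norm (of_int q *\<^sub>R x - z) / of_int q"
      using \<open>q > 0\<close> by (simp add: dist_norm norm_minus_commute)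
    moreover have "\<dots> \<le> norm (of_int q *\<^sub>R x - z)"
      using \<open>q > 0\<close> by (simp add: divide_le_eq mult_le_cancel_left1)
    ultimately show ?thesis
      using qz by (metis min.strict_boundedE order_le_less_trans)
  qed
  then have "x \<in> closure ?S"
    unfolding closure_approachable by blast
  then show ?thesis
    by (simp add: closed_subspace)
qed

lemma kernel_in_span_int_lattice_kernel_integral:
  fixes f :: "real ^ 'm \<Rightarrow> real ^ 'n"
  assumes "linear f" and "\<And>z. z \<in> int_lattice \<Longrightarrow> f z \<in> int_lattice" and "f x = 0"
  shows "x \<in> span {z \<in> int_lattice. f z = 0}"
  by (rule kernel_in_span_int_lattice_kernel[OF assms(1) zero_less_one _ assms(3)])
     (use assms(2) int_lattice_norm_less_1 in blast)

lemma int_lattice_rational_combination: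
  fixes B :: "(real ^ 'n) set"
  assumes B: "independent B" "B \<subseteq> int_lattice" and x: "x \<in> int_lattice" "x \<in> span B"
  obtains d :: int and a where "d > 0" "of_int d *\<^sub>R x = (\<Sum>b\<in>B. of_int (a b) *\<^sub>R b)"
proof -
  have "finite B" "card B \<le> CARD('n)"
    using independent_bound[OF B(1)] by auto
  then obtain h :: "real ^ 'n \<Rightarrow> 'n" where h: "inj_on h B"
    using card_le_inj[of B "UNIV :: 'n set"] by auto
  obtain u where u: "x = (\<Sum>b\<in>B. u b *\<^sub>R b)"
    using x(2) span_finite[OF \<open>finite B\<close>] by auto
  (* Coordinates Some (h b) carry the coefficients of the b in B, coordinate None that of x.
     The lattice kernel of f spans a space containing the real relation \<gamma> with \<gamma> $ None = 1,
     so some integral relation has a nonzero coefficient at x. *)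
  define f :: "real ^ 'n option \<Rightarrow> real ^ 'n"
    where "f y = (\<Sum>b\<in>B. y $ Some (h b) *\<^sub>R b) - y $ None *\<^sub>R x" for y
  have "linear f"
    by (rule linearI) (simp_all add: f_def scaleR_add_left sum.distrib scaleR_sum_right algebra_simps)
  have f_int: "f z \<in> int_lattice" if "z \<in> int_lattice" for z
    using that B(2) x(1) unfolding f_def
    by (intro int_lattice_diff int_lattice_sum int_lattice_scaleR) auto
  define \<gamma> :: "real ^ 'n option"
    where "\<gamma> = (\<chi> j. case j of None \<Rightarrow> 1 | Some i \<Rightarrow> u (inv_into B h i))"
  have "f \<gamma> = 0"
    using h by (simp add: f_def \<gamma>_def u)
  then have "\<gamma> \<in> span {z \<in> int_lattice. f z = 0}"
    using kernel_in_span_int_lattice_kernel_integral[OF \<open>linear f\<close> f_int] by blast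
  moreover have "span {z \<in> int_lattice. f z = 0} \<subseteq> {y. y $ None = 0}"
    if "\<forall>z \<in> {z \<in> int_lattice. f z = 0}. z $ None = 0"
    using that by (intro span_minimal) (auto simp: subspace_def)
  ultimately obtain z where z: "z \<in> int_lattice" "f z = 0" "z $ None \<noteq> 0"
    by (force simp: \<gamma>_def)
  obtain T where T: "z $ None = of_int T"
    using z(1) by (auto elim: Ints_cases)
  define a where "a b = sgn T * \<lfloor>z $ Some (h b)\<rfloor>" for b
  have "of_int \<bar>T\<bar> *\<^sub>R x = of_int (sgn T) *\<^sub>R (z $ None *\<^sub>R x)"
    using T by (simp add: abs_sgn mult.commute)
  also have "\<dots> = of_int (sgn T) *\<^sub>R (\<Sum>b\<in>B. z $ Some (h b) *\<^sub>R b)"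
    using z(2) by (simp add: f_def)
  also have "\<dots> = (\<Sum>b\<in>B. of_int (a b) *\<^sub>R b)"
    using int_lattice_floor[OF z(1)] by (simp add: a_def scaleR_sum_right)
  finally show ?thesis
    using that[of "\<bar>T\<bar>" a] z(3) T by simp
qed

lemma int_lattice_multiple_in_subgroup:
  assumes G: "add_subgroup_of G int_lattice" and x: "x \<in> int_lattice" "x \<in> span G"
  obtains d :: int where "d > 0" "of_int d *\<^sub>R x \<in> G"
proof -
  obtain B where B: "B \<subseteq> G" "independent B" "G \<subseteq> span B" "card B = dim G"
    by (rule basis_exists)
  have "B \<subseteq> int_lattice"
    using G B(1) by (auto simp: add_subgroup_of_def)
  moreover have "x \<in> span B"
    using span_minimal[OF B(3) subspace_span] x(2) by blast
  ultimately obtain d a where "d > 0" and da: "of_int d *\<^sub>R x = (\<Sum>b\<in>B. of_int (a b) *\<^sub>R b)"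
    by (rule int_lattice_rational_combination[OF B(2) _ x(1)])
  have "(\<Sum>b\<in>B. of_int (a b) *\<^sub>R b) \<in> G"
    using B(1) by (intro add_subgroup_of_sum[OF G] add_subgroup_of_int_scaleR[OF G]) auto
  with \<open>d > 0\<close> show ?thesis
    using that da by simp
qed

lemma int_lattice_multiple_in_full_rank_subgroup:
  fixes G :: "(real ^ 'n) set"
  assumes G: "add_subgroup_of G int_lattice" and "span G = UNIV"
  obtains D :: int where "D > 0" "\<And>z. z \<in> int_lattice \<Longrightarrow> of_int D *\<^sub>R z \<in> G"
proof -
  have "\<exists>d>0. of_int d *\<^sub>R axis i (1::real) \<in> G" for i
  proof -
    have "axis i (1::real) \<in> int_lattice" "axis i (1::real) \<in> span G"
      using \<open>span G = UNIV\<close> by (simp_all add: axis_def)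
    then obtain d where "d > 0" "of_int d *\<^sub>R axis i (1::real) \<in> G"
      by (rule int_lattice_multiple_in_subgroup[OF G])
    then show ?thesis
      by blast
  qed
  then obtain d where d: "\<And>i. d i > 0" "\<And>i. of_int (d i) *\<^sub>R axis i (1::real) \<in> G"
    by metis
  define D where "D = (\<Prod>i\<in>UNIV. d i)"
  have "of_int D *\<^sub>R z \<in> G" if z: "z \<in> int_lattice" for z
  proof -
    have "of_int D * z $ i = of_int (\<lfloor>z $ i\<rfloor> * (D div d i)) * of_int (d i)" for i
    proof -
      obtain m where m: "z $ i = of_int m"
        using z by (auto elim: Ints_cases)
      have "D = D div d i * d i"
        unfolding D_def by (simp add: dvd_prodI)
      then have "D * m = m * (D div d i) * d i"
        by (simp add: ac_simps)
      then show ?thesis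
        unfolding m floor_of_int by (simp flip: of_int_mult)
    qed
    moreover have "of_int D *\<^sub>R z = (\<Sum>i\<in>UNIV. (of_int D * z $ i) *\<^sub>R axis i 1)"
      by (auto simp: axis_def vec_eq_iff if_distrib sum.If_cases cong del: if_weak_cong)
    ultimately have "of_int D *\<^sub>R z = (\<Sum>i\<in>UNIV. of_int (\<lfloor>z $ i\<rfloor> * (D div d i)) *\<^sub>R (of_int (d i) *\<^sub>R axis i 1))"
      by simp
    also have "\<dots> \<in> G"
      by (intro add_subgroup_of_sum[OF G]) (rule add_subgroup_of_int_scaleR[OF G d(2)])
    finally show ?thesis .
  qed
  moreover have "D > 0"
    using d(1) by (simp add: D_def prod_pos)
  ultimately show ?thesis
    using that by blast
qed

lemma int_independentD:
  "int_independent S \<Longrightarrow> finite T \<Longrightarrow> T \<subseteq> S \<Longrightarrow> (\<And>v. v \<in> T \<Longrightarrow> c v \<in> \<int>) \<Longrightarrow>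
    (\<Sum>v\<in>T. c v *\<^sub>R v) = 0 \<Longrightarrow> v \<in> T \<Longrightarrow> c v = 0"
  unfolding int_independent_def by blast

lemma independent_imp_int_independent: "independent S \<Longrightarrow> int_independent S"
  unfolding int_independent_def using independentD by blast

lemma int_independent_imp_independent:
  assumes "S \<subseteq> int_lattice" and "int_independent S"
  shows "independent S"
proof -
  obtain B where B: "B \<subseteq> S" "independent B" "S \<subseteq> span B" "card B = dim S"
    by (rule basis_exists)
  have "s \<in> B" if "s \<in> S" for s
  proof (rule ccontr)
    assume "s \<notin> B"
    have "B \<subseteq> int_lattice" "s \<in> int_lattice" "s \<in> span B"
      using B \<open>s \<in> S\<close> \<open>S \<subseteq> int_lattice\<close> by auto
    then obtain d a where "d > 0" and da: "of_int d *\<^sub>R s = (\<Sum>b\<in>B. of_int (a b) *\<^sub>R b)"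
      by (rule int_lattice_rational_combination[OF B(2)])
    define c where "c v = (if v = s then - real_of_int d else real_of_int (a v))" for v
    have "finite B"
      using B(2) by (simp add: independent_bound)
    have "(\<Sum>v\<in>insert s B. c v *\<^sub>R v) = - (of_int d *\<^sub>R s) + (\<Sum>v\<in>B. c v *\<^sub>R v)"
      using \<open>finite B\<close> \<open>s \<notin> B\<close> by (simp add: c_def)
    also have "(\<Sum>v\<in>B. c v *\<^sub>R v) = (\<Sum>b\<in>B. of_int (a b) *\<^sub>R b)"
      using \<open>s \<notin> B\<close> by (intro sum.cong) (auto simp: c_def)
    finally have sum0: "(\<Sum>v\<in>insert s B. c v *\<^sub>R v) = 0"
      using da by simp
    have "c s = 0"
      by (rule int_independentD[OF assms(2) _ _ _ sum0]) (use B(1) \<open>s \<in> S\<close> \<open>finite B\<close> in \<open>auto simp: c_def\<close>)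
    with \<open>d > 0\<close> show False
      by (simp add: c_def)
  qed
  then have "S = B"
    using B(1) by blast
  with B(2) show ?thesis
    by simp
qed

lemma group_rank_int_lattice:
  assumes "L \<subseteq> int_lattice"
  shows "group_rank L = dim L"
  unfolding group_rank_def
proof (rule Greatest_equality)
  obtain B where "B \<subseteq> L" "independent B" "L \<subseteq> span B" "card B = dim L"
    by (rule basis_exists)
  then show "\<exists>S\<subseteq>L. finite S \<and> card S = dim L \<and> int_independent S"
    using independent_imp_int_independent independent_bound by blast
next
  fix k assume "\<exists>S\<subseteq>L. finite S \<and> card S = k \<and> int_independent S"
  then obtain S where "S \<subseteq> L" "card S = k" "int_independent S"
    by blast
  moreover have "independent S"
    using \<open>S \<subseteq> L\<close> assms \<open>int_independent S\<close> by (intro int_independent_imp_independent) auto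
  ultimately show "k \<le> dim L"
    using independent_card_le_dim by blast
qed

lemma orthogonal_comp_subset_span_int_lattice:
  fixes A :: "(real ^ 'n) set"
  assumes "A \<subseteq> int_lattice"
  shows "A\<^sup>\<bottom> \<subseteq> span (A\<^sup>\<bottom> \<inter> int_lattice)"
proof
  fix y assume "y \<in> A\<^sup>\<bottom>"
  obtain B where B: "B \<subseteq> A" "independent B" "A \<subseteq> span B" "card B = dim A"
    by (rule basis_exists)
  have "finite B"
    using B(2) by (simp add: independent_bound)
  (* f is integral, and z \<bullet> f z is the sum of the squares (z \<bullet> b)^2, so ker f = B^perp = A^perp. *)
  define f where "f x = (\<Sum>b\<in>B. (x \<bullet> b) *\<^sub>R b)" for x :: "real ^ 'n"
  have "linear f"
    by (rule linearI)
       (simp_all add: f_def inner_add_left scaleR_add_left sum.distrib scaleR_sum_right)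
  moreover have "f z \<in> int_lattice" if "z \<in> int_lattice" for z
    unfolding f_def using that assms B(1)
    by (intro int_lattice_sum int_lattice_scaleR int_lattice_inner) auto
  moreover have "f y = 0"
    using \<open>y \<in> A\<^sup>\<bottom>\<close> B(1) by (auto simp: f_def orthogonal_comp_def orthogonal_def inner_commute intro!: sum.neutral)
  ultimately have "y \<in> span {z \<in> int_lattice. f z = 0}"
    by (rule kernel_in_span_int_lattice_kernel_integral)
  moreover have "{z \<in> int_lattice. f z = 0} \<subseteq> A\<^sup>\<bottom> \<inter> int_lattice"
  proof
    fix z assume z: "z \<in> {z \<in> int_lattice. f z = 0}"
    have "(\<Sum>b\<in>B. (z \<bullet> b) * (z \<bullet> b)) = z \<bullet> f z"
      by (simp add: f_def inner_sum_right)
    then have "\<forall>b\<in>B. z \<bullet> b = 0"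
      using z \<open>finite B\<close> by (simp add: sum_nonneg_eq_0_iff)
    then have "orthogonal z a" if "a \<in> A" for a
      using B(3) that by (intro orthogonal_to_span[of a B]) (auto simp: orthogonal_def)
    then show "z \<in> A\<^sup>\<bottom> \<inter> int_lattice"
      using z by (simp add: orthogonal_comp_def orthogonal_commute)
  qed
  ultimately show "y \<in> span (A\<^sup>\<bottom> \<inter> int_lattice)"
    using span_mono by blast
qed

lemma inner_Ints_on_dense_imp_orthogonal:
  fixes x :: "'a::real_inner"
  assumes "subspace V" and "V \<subseteq> closure D" and Ints: "\<And>d. d \<in> D \<Longrightarrow> x \<bullet> d \<in> \<int>" and "v \<in> V"
  shows "x \<bullet> v = 0"
proof (rule ccontr)
  assume "x \<bullet> v \<noteq> 0"
  have "closed ((\<bullet>) x -` \<int>)"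
    by (intro closed_vimage continuous_intros) simp
  then have "closure D \<subseteq> (\<bullet>) x -` \<int>"
    using Ints by (intro closure_minimal) auto
  moreover have "(1 / (2 * (x \<bullet> v))) *\<^sub>R v \<in> V"
    using \<open>subspace V\<close> \<open>v \<in> V\<close> by (simp add: subspace_scale)
  ultimately have "x \<bullet> ((1 / (2 * (x \<bullet> v))) *\<^sub>R v) \<in> \<int>"
    using \<open>V \<subseteq> closure D\<close> by blast
  with \<open>x \<bullet> v \<noteq> 0\<close> show False
    using half_notin_Ints by simp
qed

lemma preimage_subspace_subset_span_int_lattice:
  fixes f :: "real ^ 'n \<Rightarrow> 'a::euclidean_space"
  assumes f: "linear f" and V: "subspace V" and W: "subspace W" and "V \<inter> W = {0}"
    and disc: "discrete (f ` int_lattice \<inter> W)"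
    and decomp: "f ` int_lattice \<subseteq> set_plus_sp V (W \<inter> f ` int_lattice)"
  shows "{x. f x \<in> V} \<subseteq> span {z \<in> int_lattice. f z \<in> V}"
proof -
  obtain q where q: "is_orthogonal_projection V q"
    by (rule orthogonal_projection_exists[OF V])
  have "linear q"
    by (rule orthogonal_projection_linear[OF V q])
  have qV: "q y = y" if "y \<in> V" for y
    by (rule orthogonal_projection_id[OF V q that])
  have q_in: "q y \<in> V" for y
    using q by (simp add: is_orthogonal_projection_def)
  (* On a lattice point with f z = v + w this is w - q w, so the discreteness of the
     W-parts gives the gap needed for g. *)
  define g where "g x = f x - q (f x)" for x
  have "linear g"
    by (rule linearI) (simp_all add: g_def linear_add[OF f] linear_scale[OF f]
        linear_add[OF \<open>linear q\<close>] linear_scale[OF \<open>linear q\<close>] algebra_simps)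
  have g0: "g x = 0 \<longleftrightarrow> f x \<in> V" for x
    using q_in[of "f x"] qV[of "f x"] by (auto simp: g_def)
  have "0 \<in> f ` int_lattice \<inter> W"
    using f W imageI[of 0 int_lattice f] by (simp add: linear_0 subspace_0)
  then obtain \<delta> where "\<delta> > 0" and \<delta>: "\<forall>w \<in> f ` int_lattice \<inter> W. dist 0 w < \<delta> \<longrightarrow> w = 0"
    using discreteD[OF disc] unfolding isolated_in_dist_Ex_iff by blast
  obtain c where "c > 0" and c: "\<And>w. w \<in> W \<Longrightarrow> c * norm w \<le> norm (w - q w)"
    using orthogonal_projection_bound_on_complement[OF V W \<open>V \<inter> W = {0}\<close> q] by blast
  have gap: "g z = 0" if "z \<in> int_lattice" "norm (g z) < c * \<delta>" for z
  proof -
    obtain v w where "v \<in> V" "w \<in> W \<inter> f ` int_lattice" "f z = v + w"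
      using decomp \<open>z \<in> int_lattice\<close> unfolding set_plus_sp_def by blast
    moreover from this have "g z = w - q w"
      using \<open>linear q\<close> qV by (simp add: g_def linear_add)
    ultimately have "c * norm w \<le> norm (g z)"
      using c by simp
    then have "c * norm w < c * \<delta>"
      using that(2) by linarith
    then have "w = 0"
      using \<delta> \<open>c > 0\<close> \<open>w \<in> W \<inter> f ` int_lattice\<close> by auto
    with \<open>g z = w - q w\<close> show ?thesis
      using \<open>linear q\<close> by (simp add: linear_0)
  qed
  show ?thesis
  proof
    fix x assume "x \<in> {x. f x \<in> V}"
    then have "x \<in> span {z \<in> int_lattice. g z = 0}"
      using \<open>c > 0\<close> \<open>\<delta> > 0\<close> g0
      by (intro kernel_in_span_int_lattice_kernel[OF \<open>linear g\<close> _ gap]) auto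
    then show "x \<in> span {z \<in> int_lattice. f z \<in> V}"
      by (simp add: g0)
  qed
qed

locale lattice_projection_splitting =
  fixes F V W :: "(real ^ 'n) set" and \<phi> :: "real ^ 'n \<Rightarrow> real ^ 'n"
  assumes subspace_F: "subspace F"
    and proj: "\<And>x. \<phi> x \<in> F \<and> (\<forall>z\<in>F. (x - \<phi> x) \<bullet> z = 0)"
    and subspace_V: "subspace V" and subspace_W: "subspace W"
    and V_Int_W: "V \<inter> W = {0}" and V_plus_W: "set_plus_sp V W = F"
    and dense: "closure (\<phi> ` int_lattice \<inter> V) = V"
    and discrete: "discrete (\<phi> ` int_lattice \<inter> W)"
    and splitting: "\<phi> ` int_lattice = set_plus_sp (V \<inter> \<phi> ` int_lattice) (W \<inter> \<phi> ` int_lattice)"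
begin

lemma orthogonal_projection: "is_orthogonal_projection F \<phi>"
  using proj by (simp add: is_orthogonal_projection_def)

lemma linear_\<phi>: "linear \<phi>"
  by (rule orthogonal_projection_linear[OF subspace_F orthogonal_projection])

lemma \<phi>_id: "x \<in> F \<Longrightarrow> \<phi> x = x"
  by (rule orthogonal_projection_id[OF subspace_F orthogonal_projection])

lemma V_subset_F: "V \<subseteq> F"
proof
  fix v assume "v \<in> V"
  then have "v + 0 \<in> set_plus_sp V W"
    using subspace_W unfolding set_plus_sp_def by (blast intro: subspace_0)
  then show "v \<in> F"
    using V_plus_W by simp
qed

lemma subspace_preimage_V: "subspace {x. \<phi> x \<in> V}"
  using linear_\<phi> subspace_V by (auto simp: subspace_def linear_0 linear_add linear_scale)

lemma preimage_V_subset_span: "{x. \<phi> x \<in> V} \<subseteq> span {z \<in> int_lattice. \<phi> z \<in> V}"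
proof (rule preimage_subspace_subset_span_int_lattice[OF linear_\<phi> subspace_V subspace_W V_Int_W discrete])
  show "\<phi> ` int_lattice \<subseteq> set_plus_sp V (W \<inter> \<phi> ` int_lattice)"
    by (subst splitting) (auto simp: set_plus_sp_def)
qed

lemma lattice_orthogonal_V:
  assumes "x \<in> F \<inter> int_lattice" and "v \<in> V"
  shows "x \<bullet> v = 0"
proof (rule inner_Ints_on_dense_imp_orthogonal[OF subspace_V _ _ \<open>v \<in> V\<close>])
  show "V \<subseteq> closure (\<phi> ` int_lattice \<inter> V)"
    by (simp add: dense)
  show "x \<bullet> y \<in> \<int>" if y: "y \<in> \<phi> ` int_lattice \<inter> V" for y
  proof -
    obtain z where "z \<in> int_lattice" "y = \<phi> z"
      using y by blast
    then have "x \<bullet> y = z \<bullet> x"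
      using orthogonal_projection_inner[OF orthogonal_projection, of x z] assms(1)
      by (simp add: inner_commute)
    then show ?thesis
      using \<open>z \<in> int_lattice\<close> assms(1) by (simp add: int_lattice_inner)
  qed
qed

lemma orthogonal_comp_preimage_V: "{x. \<phi> x \<in> V}\<^sup>\<bottom> \<subseteq> F \<inter> V\<^sup>\<bottom>"
proof -
  have "F\<^sup>\<bottom> \<subseteq> {x. \<phi> x \<in> V}"
    using orthogonal_projection_orthogonal_comp[OF subspace_F orthogonal_projection]
    by (auto simp: subspace_0[OF subspace_V])
  then have "{x. \<phi> x \<in> V}\<^sup>\<bottom> \<subseteq> F"
    using orthogonal_comp_anti_mono orthogonal_comp_self[OF subspace_F] by metis
  moreover have "V \<subseteq> {x. \<phi> x \<in> V}"
    using V_subset_F \<phi>_id by auto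
  then have "{x. \<phi> x \<in> V}\<^sup>\<bottom> \<subseteq> V\<^sup>\<bottom>"
    by (rule orthogonal_comp_anti_mono)
  ultimately show ?thesis
    by blast
qed

lemma orthogonal_comp_lattice_preimage_V: "{z \<in> int_lattice. \<phi> z \<in> V}\<^sup>\<bottom> = F \<inter> V\<^sup>\<bottom>"
proof
  show "{z \<in> int_lattice. \<phi> z \<in> V}\<^sup>\<bottom> \<subseteq> F \<inter> V\<^sup>\<bottom>"
  proof
    fix y assume y: "y \<in> {z \<in> int_lattice. \<phi> z \<in> V}\<^sup>\<bottom>"
    have "orthogonal x y" if "\<phi> x \<in> V" for x
      using preimage_V_subset_span that y
      by (intro orthogonal_to_span[of x, THEN orthogonal_commute[THEN iffD1]])
         (auto simp: orthogonal_comp_def orthogonal_commute)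
    then show "y \<in> F \<inter> V\<^sup>\<bottom>"
      using orthogonal_comp_preimage_V by (auto simp: orthogonal_comp_def)
  qed
  show "F \<inter> V\<^sup>\<bottom> \<subseteq> {z \<in> int_lattice. \<phi> z \<in> V}\<^sup>\<bottom>"
  proof
    fix y assume y: "y \<in> F \<inter> V\<^sup>\<bottom>"
    have "orthogonal z y" if "\<phi> z \<in> V" for z
      using orthogonal_projection_inner[OF orthogonal_projection, of y z] y that
      by (auto simp: orthogonal_comp_def orthogonal_def)
    then show "y \<in> {z \<in> int_lattice. \<phi> z \<in> V}\<^sup>\<bottom>"
      by (auto simp: orthogonal_comp_def)
  qed
qed

lemma span_lattice_F: "span (F \<inter> int_lattice) = F \<inter> V\<^sup>\<bottom>"
proof
  have "F \<inter> int_lattice \<subseteq> F \<inter> V\<^sup>\<bottom>"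
    using lattice_orthogonal_V by (auto simp: orthogonal_comp_def orthogonal_def inner_commute)
  then show "span (F \<inter> int_lattice) \<subseteq> F \<inter> V\<^sup>\<bottom>"
    by (intro span_minimal subspace_inter subspace_F subspace_orthogonal_comp)
  have "F \<inter> V\<^sup>\<bottom> \<subseteq> span (F \<inter> V\<^sup>\<bottom> \<inter> int_lattice)"
    using orthogonal_comp_subset_span_int_lattice[of "{z \<in> int_lattice. \<phi> z \<in> V}"]
    unfolding orthogonal_comp_lattice_preimage_V by blast
  also have "\<dots> \<subseteq> span (F \<inter> int_lattice)"
    by (intro span_mono) blast
  finally show "F \<inter> V\<^sup>\<bottom> \<subseteq> span (F \<inter> int_lattice)" .
qed

lemma span_preimage_plus_lattice_F:
  "span (set_plus_sp {z \<in> int_lattice. \<phi> z \<in> V} (F \<inter> int_lattice)) = UNIV"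
proof -
  let ?K = "{z \<in> int_lattice. \<phi> z \<in> V}" and ?L = "F \<inter> int_lattice"
  have "0 \<in> ?K" "0 \<in> ?L"
    using subspace_0[OF subspace_F] subspace_0[OF subspace_V] linear_0[OF linear_\<phi>] by auto
  then have "?K \<subseteq> set_plus_sp ?K ?L" "?L \<subseteq> set_plus_sp ?K ?L"
    by (simp_all add: set_plus_sp_subset_left set_plus_sp_subset_right)
  then have K: "span ?K \<subseteq> span (set_plus_sp ?K ?L)" and L: "span ?L \<subseteq> span (set_plus_sp ?K ?L)"
    by (simp_all add: span_mono)
  have "x \<in> span (set_plus_sp ?K ?L)" for x
  proof -
    obtain p p' where "p \<in> {x. \<phi> x \<in> V}" "p' \<in> {x. \<phi> x \<in> V}\<^sup>\<bottom>" "x = p + p'"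
      using subspace_sum_orthogonal_comp[OF subspace_preimage_V] set_plus_elim by blast
    moreover from this have "p \<in> span ?K" "p' \<in> span ?L"
      using preimage_V_subset_span orthogonal_comp_preimage_V span_lattice_F by auto
    ultimately show ?thesis
      using K L by (auto intro: span_add)
  qed
  then show ?thesis
    by blast
qed

lemma add_subgroup_of_projection: "add_subgroup_of (\<phi> ` int_lattice) UNIV"
  by (rule add_subgroup_of_linear_image[OF linear_\<phi> add_subgroup_of_int_lattice])

lemma add_subgroup_of_sum_lattices:
  "add_subgroup_of (set_plus_sp (F \<inter> int_lattice) (V \<inter> \<phi> ` int_lattice)) (\<phi> ` int_lattice)"
proof (rule add_subgroup_of_set_plus_sp[OF _ _ add_subgroup_of_projection])
  have "F \<inter> int_lattice \<subseteq> \<phi> ` int_lattice"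
    using \<phi>_id by force
  then show "add_subgroup_of (F \<inter> int_lattice) (\<phi> ` int_lattice)"
    using add_subgroup_of_Int_subspace[OF subspace_F add_subgroup_of_int_lattice]
    by (rule add_subgroup_of_subset[rotated])
  show "add_subgroup_of (V \<inter> \<phi> ` int_lattice) (\<phi> ` int_lattice)"
    by (rule add_subgroup_of_Int_subspace[OF subspace_V add_subgroup_of_projection])
qed

lemma finite_index_sum_lattices:
  "finite_index (set_plus_sp (F \<inter> int_lattice) (V \<inter> \<phi> ` int_lattice)) (\<phi> ` int_lattice)"
proof -
  let ?K = "{z \<in> int_lattice. \<phi> z \<in> V}"
  have "?K = {x. \<phi> x \<in> V} \<inter> int_lattice"
    by blast
  then have "add_subgroup_of (set_plus_sp ?K (F \<inter> int_lattice)) int_lattice"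
    using add_subgroup_of_Int_subspace[OF subspace_preimage_V add_subgroup_of_int_lattice]
      add_subgroup_of_Int_subspace[OF subspace_F add_subgroup_of_int_lattice]
    by (simp add: add_subgroup_of_set_plus_sp add_subgroup_of_int_lattice)
  then obtain D where "D > 0" and D: "\<And>z. z \<in> int_lattice \<Longrightarrow> of_int D *\<^sub>R z \<in> set_plus_sp ?K (F \<inter> int_lattice)"
    using int_lattice_multiple_in_full_rank_subgroup span_preimage_plus_lattice_F by blast
  have "\<phi> (of_int D *\<^sub>R z) \<in> set_plus_sp (F \<inter> int_lattice) (V \<inter> \<phi> ` int_lattice)"
    if z: "z \<in> int_lattice" for z
  proof -
    obtain k l where "k \<in> ?K" "l \<in> F \<inter> int_lattice" "of_int D *\<^sub>R z = k + l"
      using D[OF z] unfolding set_plus_sp_def by blast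
    moreover from this have "\<phi> (of_int D *\<^sub>R z) = l + \<phi> k"
      using \<phi>_id linear_\<phi> by (simp add: linear_add)
    ultimately show ?thesis
      unfolding set_plus_sp_def by blast
  qed
  then show ?thesis
    using finite_index_linear_image_int_lattice[OF linear_\<phi> add_subgroup_of_sum_lattices \<open>D > 0\<close>]
    by blast
qed

lemma group_rank_lattice_F: "group_rank (F \<inter> int_lattice) = dim F - dim V"
proof -
  have "F \<inter> V\<^sup>\<bottom> = {y \<in> F. \<forall>x\<in>V. orthogonal x y}"
    by (auto simp: orthogonal_comp_def)
  then have "dim (F \<inter> V\<^sup>\<bottom>) + dim V = dim F"
    using dim_subspace_orthogonal_to_vectors[OF subspace_V subspace_F V_subset_F] by simp
  moreover have "group_rank (F \<inter> int_lattice) = dim (F \<inter> V\<^sup>\<bottom>)"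
    using group_rank_int_lattice[of "F \<inter> int_lattice"] dim_span[of "F \<inter> int_lattice"]
    by (simp add: span_lattice_F)
  ultimately show ?thesis
    by simp
qed

lemma span_lattice_F_orthogonal_V: "\<forall>x\<in>span (F \<inter> int_lattice). \<forall>v\<in>V. x \<bullet> v = 0"
  by (auto simp: span_lattice_F orthogonal_comp_def orthogonal_def inner_commute)

end

theorem lemmaI2p9:
  fixes F V W :: "(real ^ 'n) set" and \<phi> :: "real ^ 'n \<Rightarrow> real ^ 'n"
  assumes "subspace F"
    and proj: "\<And>x. \<phi> x \<in> F \<and> (\<forall>z\<in>F. (x - \<phi> x) \<bullet> z = 0)"
    and "subspace V" and "subspace W"
    and "V \<inter> W = {0}" and "set_plus_sp V W = F"
    and "closure (\<phi> ` int_lattice \<inter> V) = V"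
    and "discrete (\<phi> ` int_lattice \<inter> W)"
    and "\<phi> ` int_lattice = set_plus_sp (V \<inter> \<phi> ` int_lattice) (W \<inter> \<phi> ` int_lattice)"
  shows "add_subgroup_of (set_plus_sp (F \<inter> int_lattice) (V \<inter> \<phi> ` int_lattice)) (\<phi> ` int_lattice)
       \<and> finite_index (set_plus_sp (F \<inter> int_lattice) (V \<inter> \<phi> ` int_lattice)) (\<phi> ` int_lattice)
       \<and> group_rank (F \<inter> int_lattice) = dim F - dim V
       \<and> (\<forall>x\<in>span (F \<inter> int_lattice). \<forall>v\<in>V. x \<bullet> v = 0)"
proof -
  interpret lattice_projection_splitting F V W \<phi>
    by (rule lattice_projection_splitting.intro) (fact assms)+
  show ?thesis
    using add_subgroup_of_sum_lattices finite_index_sum_lattices group_rank_lattice_F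
      span_lattice_F_orthogonal_V by blast
qed

end
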